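(* Let $F\in\mathbb{R}[x_1,\dots,x_n]$ be a form. If there is a positive integer $k$ such that every form in $\mathrm{SDS}^{(k)}(F)$ has all coefficients nonnegative, then $F(X)\ge0$ for all $X\in\mathbb{R}_+^n$. If there is a positive integer $k$ and a form $G\in\mathrm{SDS}^{(k)}(F)$ with $G(1,\dots,1)<0$, then $F$ is not nonnegative on $\mathbb{R}_+^n$ (there is $X\in\mathbb{R}_+^n$ with $F(X)<0$).
   Context: $\mathbb{R}_+^n=\{(x_1,\dots,x_n): x_i\ge0\}$. $W_n$ is the $n\times n$ matrix with $(W_n)_{ij}=1/j$ for $i\le j$ and $0$ for $i>j$. For a permutation $[k_1\cdots k_n]$ of $1,\dots,n$, $P_{[k_1\cdots k_n]}$ is the permutation matrix with $1$ in positions $(i,k_i)$ and $0$ elsewhere, and $B_{[k_1\cdots k_n]}=P_{[k_1\cdots k_n]}W_n$; $PW_n$ denotes the set of these $n!$ matrices. For $m\ge1$, $\mathrm{SDS}^{(m)}(F)$ is the set of forms $F(B_{[\alpha_1]}\cdots B_{[\alpha_m]}X^{\mathrm{Tr}})$, $X=(x_1,\dots,x_n)$, as $B_{[\alpha_1]},\dots,B_{[\alpha_m]}$ range independently over $PW_n$. *)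

theory Defs
  imports Complex_Main "HOL-Library.Poly_Mapping" "HOL-Combinatorics.Permutations"
begin

text \<open>The paper's variables x_1..x_n correspond to indices 0..n-1.\<close>

type_synonym mpoly = "(nat \<Rightarrow>\<^sub>0 nat) \<Rightarrow>\<^sub>0 real"

definition mvar :: "nat \<Rightarrow> mpoly" where
  "mvar i = Poly_Mapping.single (Poly_Mapping.single i 1) 1"

definition mconst :: "real \<Rightarrow> mpoly" where
  "mconst c = Poly_Mapping.single 0 c"

definition mdeg :: "(nat \<Rightarrow>\<^sub>0 nat) \<Rightarrow> nat" where
  "mdeg m = (\<Sum>i\<in>Poly_Mapping.keys m. Poly_Mapping.lookup m i)"

definition is_form :: "nat \<Rightarrow> mpoly \<Rightarrow> bool" where
  "is_form n F \<longleftrightarrow> (\<exists>d. \<forall>m\<in>Poly_Mapping.keys F. Poly_Mapping.keys m \<subseteq> {..<n} \<and> mdeg m = d)"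

definition meval :: "mpoly \<Rightarrow> (nat \<Rightarrow> real) \<Rightarrow> real" where
  "meval F x = (\<Sum>m\<in>Poly_Mapping.keys F. Poly_Mapping.lookup F m * (\<Prod>i\<in>Poly_Mapping.keys m. x i ^ Poly_Mapping.lookup m i))"

definition msubst :: "mpoly \<Rightarrow> (nat \<Rightarrow> mpoly) \<Rightarrow> mpoly" where
  "msubst F g = (\<Sum>m\<in>Poly_Mapping.keys F. mconst (Poly_Mapping.lookup F m) * (\<Prod>i\<in>Poly_Mapping.keys m. g i ^ Poly_Mapping.lookup m i))"

definition W :: "nat \<Rightarrow> nat \<Rightarrow> real" where
  "W i j = (if i \<le> j then 1 / real (j + 1) else 0)"

definition Pmat :: "(nat \<Rightarrow> nat) \<Rightarrow> nat \<Rightarrow> nat \<Rightarrow> real" where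
  "Pmat p i k = (if k = p i then 1 else 0)"

definition mat_mult :: "nat \<Rightarrow> (nat \<Rightarrow> nat \<Rightarrow> real) \<Rightarrow> (nat \<Rightarrow> nat \<Rightarrow> real) \<Rightarrow> nat \<Rightarrow> nat \<Rightarrow> real" where
  "mat_mult n A C i j = (\<Sum>l<n. A i l * C l j)"

definition mat_id :: "nat \<Rightarrow> nat \<Rightarrow> real" where
  "mat_id i j = (if i = j then 1 else 0)"

definition Bmat :: "nat \<Rightarrow> (nat \<Rightarrow> nat) \<Rightarrow> nat \<Rightarrow> nat \<Rightarrow> real" where
  "Bmat n p = mat_mult n (Pmat p) W"

definition Bprod :: "nat \<Rightarrow> (nat \<Rightarrow> nat) list \<Rightarrow> nat \<Rightarrow> nat \<Rightarrow> real" where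
  "Bprod n ps = foldr (\<lambda>p M. mat_mult n (Bmat n p) M) ps mat_id"

text \<open>F(M X^Tr): substitute x_i := sum_j M i j x_j.\<close>
definition mat_subst :: "nat \<Rightarrow> (nat \<Rightarrow> nat \<Rightarrow> real) \<Rightarrow> mpoly \<Rightarrow> mpoly" where
  "mat_subst n M F = msubst F (\<lambda>i. \<Sum>j<n. mconst (M i j) * mvar j)"

definition SDS :: "nat \<Rightarrow> nat \<Rightarrow> mpoly \<Rightarrow> mpoly set" where
  "SDS n k F = {mat_subst n (Bprod n ps) F | ps. length ps = k \<and> (\<forall>p\<in>set ps. p permutes {..<n})}"

end

theory Submission
  imports Defs
begin

text \<open>Every vector X of the nonnegative orthant is B_p Y for some Y in the orthant: choose p so
  that X is nonincreasing along p\<inverse>, i.e. sorted as z_0 \<ge> ... \<ge> z_{n-1} \<ge> z_n := 0, and take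
  Y_j = (j+1)(z_j - z_{j+1}); the sum defining (B_p Y)_i then telescopes to X_i.
  Iterating, X = B_{p_1}...B_{p_k} Y, so F(X) = G(Y) for G = F(B_{p_1}...B_{p_k} X^Tr) in
  SDS^(k)(F), and G(Y) \<ge> 0 when G has nonnegative coefficients.
  Conversely G(1,...,1) = F(B 1) and the vector B 1 is nonnegative because B is.\<close>

definition eval_monom :: "(nat \<Rightarrow>\<^sub>0 nat) \<Rightarrow> (nat \<Rightarrow> real) \<Rightarrow> real" where
  "eval_monom m x = (\<Prod>i\<in>Poly_Mapping.keys m. x i ^ Poly_Mapping.lookup m i)"

lemma eval_monom_superset:
  assumes "finite S" "Poly_Mapping.keys m \<subseteq> S"
  shows "eval_monom m x = (\<Prod>i\<in>S. x i ^ Poly_Mapping.lookup m i)"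
  unfolding eval_monom_def
  by (rule prod.mono_neutral_left) (use assms in \<open>auto simp: in_keys_iff\<close>)

lemma eval_monom_add: "eval_monom (a + b) x = eval_monom a x * eval_monom b x"
proof -
  let ?S = "Poly_Mapping.keys a \<union> Poly_Mapping.keys b"
  have "eval_monom (a + b) x = (\<Prod>i\<in>?S. x i ^ Poly_Mapping.lookup (a + b) i)"
    by (rule eval_monom_superset[OF _ keys_add]) simp
  also have "\<dots> = (\<Prod>i\<in>?S. x i ^ Poly_Mapping.lookup a i) * (\<Prod>i\<in>?S. x i ^ Poly_Mapping.lookup b i)"
    by (simp add: lookup_add power_add prod.distrib)
  also have "\<dots> = eval_monom a x * eval_monom b x"
    using eval_monom_superset[of ?S a x] eval_monom_superset[of ?S b x] by simp
  finally show ?thesis .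
qed

lemma meval_eq_sum_eval_monom:
  "meval p x = (\<Sum>m\<in>Poly_Mapping.keys p. Poly_Mapping.lookup p m * eval_monom m x)"
  by (simp add: meval_def eval_monom_def)

lemma meval_superset:
  assumes "finite S" "Poly_Mapping.keys p \<subseteq> S"
  shows "meval p x = (\<Sum>m\<in>S. Poly_Mapping.lookup p m * eval_monom m x)"
  unfolding meval_eq_sum_eval_monom
  by (rule sum.mono_neutral_left) (use assms in \<open>auto simp: in_keys_iff\<close>)

lemma meval_single: "meval (Poly_Mapping.single m c) x = c * eval_monom m x"
  by (simp add: meval_eq_sum_eval_monom)

lemma meval_add: "meval (p + q) x = meval p x + meval q x"
proof -
  let ?S = "Poly_Mapping.keys p \<union> Poly_Mapping.keys q"
  have "meval (p + q) x = (\<Sum>m\<in>?S. Poly_Mapping.lookup (p + q) m * eval_monom m x)"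
    by (rule meval_superset[OF _ keys_add]) simp
  also have "\<dots> = (\<Sum>m\<in>?S. Poly_Mapping.lookup p m * eval_monom m x)
                 + (\<Sum>m\<in>?S. Poly_Mapping.lookup q m * eval_monom m x)"
    by (simp add: lookup_add distrib_right sum.distrib)
  also have "\<dots> = meval p x + meval q x"
    using meval_superset[of ?S p x] meval_superset[of ?S q x] by simp
  finally show ?thesis .
qed

lemma meval_zero: "meval 0 x = 0"
  by (simp add: meval_def)

lemma meval_sum: "meval (sum f I) x = (\<Sum>i\<in>I. meval (f i) x)"
  by (induction I rule: infinite_finite_induct) (auto simp: meval_add meval_zero)

lemma poly_mapping_sum_single:
  "p = (\<Sum>m\<in>Poly_Mapping.keys p. Poly_Mapping.single m (Poly_Mapping.lookup p m))"
  by (rule poly_mapping_eqI) (simp add: lookup_sum lookup_single when_def in_keys_iff)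

lemma meval_mult: "meval (p * q) x = meval p x * meval q x"
proof -
  have "p * q = (\<Sum>a\<in>Poly_Mapping.keys p. \<Sum>b\<in>Poly_Mapping.keys q.
      Poly_Mapping.single a (Poly_Mapping.lookup p a) * Poly_Mapping.single b (Poly_Mapping.lookup q b))"
    by (subst poly_mapping_sum_single[of p], subst poly_mapping_sum_single[of q]) (rule sum_product)
  then have "meval (p * q) x = (\<Sum>a\<in>Poly_Mapping.keys p. \<Sum>b\<in>Poly_Mapping.keys q.
      (Poly_Mapping.lookup p a * eval_monom a x) * (Poly_Mapping.lookup q b * eval_monom b x))"
    by (simp add: meval_sum mult_single meval_single eval_monom_add mult_ac)
  also have "\<dots> = meval p x * meval q x"
    by (simp add: meval_eq_sum_eval_monom sum_product)
  finally show ?thesis .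
qed

lemma meval_one: "meval 1 x = 1"
  by (simp add: meval_eq_sum_eval_monom eval_monom_def)

lemma meval_prod: "meval (prod f I) x = (\<Prod>i\<in>I. meval (f i) x)"
  by (induction I rule: infinite_finite_induct) (auto simp: meval_mult meval_one)

lemma meval_power: "meval (p ^ k) x = meval p x ^ k"
  by (induction k) (auto simp: meval_mult meval_one)

lemma meval_mconst [simp]: "meval (mconst c) x = c"
  by (simp add: mconst_def meval_single eval_monom_def)

lemma meval_mvar [simp]: "meval (mvar i) x = x i"
  by (simp add: mvar_def meval_single eval_monom_def)

lemma meval_msubst: "meval (msubst F g) x = meval F (\<lambda>i. meval (g i) x)"
  unfolding msubst_def meval_sum meval_mult meval_prod meval_power meval_mconst
  by (simp add: meval_def)

lemma meval_cong_form:
  assumes "is_form n F" "\<And>i. i < n \<Longrightarrow> x i = y i"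
  shows "meval F x = meval F y"
proof -
  obtain d where "\<forall>m\<in>Poly_Mapping.keys F. Poly_Mapping.keys m \<subseteq> {..<n} \<and> mdeg m = d"
    using assms(1) unfolding is_form_def by blast
  then show ?thesis unfolding meval_def
    by (intro sum.cong refl arg_cong2[where f="(*)"] prod.cong) (use assms(2) in force)
qed

lemma meval_nonneg_if_coeffs_nonneg:
  assumes "\<And>m. 0 \<le> Poly_Mapping.lookup G m" "\<And>i. 0 \<le> y i"
  shows "0 \<le> meval G y"
  unfolding meval_def
  using assms by (intro sum_nonneg mult_nonneg_nonneg prod_nonneg zero_le_power) auto

definition mat_vec :: "nat \<Rightarrow> (nat \<Rightarrow> nat \<Rightarrow> real) \<Rightarrow> (nat \<Rightarrow> real) \<Rightarrow> nat \<Rightarrow> real" where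
  "mat_vec n M y i = (\<Sum>j<n. M i j * y j)"

lemma meval_mat_subst: "meval (mat_subst n M F) x = meval F (mat_vec n M x)"
  by (simp add: mat_subst_def mat_vec_def [abs_def] meval_msubst meval_sum meval_mult)

lemma mat_vec_mat_mult: "mat_vec n (mat_mult n A C) y i = mat_vec n A (mat_vec n C y) i"
  unfolding mat_vec_def mat_mult_def sum_distrib_left sum_distrib_right
  by (subst sum.swap) (simp add: mult_ac)

lemma mat_vec_cong: "(\<And>j. j < n \<Longrightarrow> y j = y' j) \<Longrightarrow> mat_vec n M y i = mat_vec n M y' i"
  unfolding mat_vec_def by simp

lemma mat_vec_mat_id: "i < n \<Longrightarrow> mat_vec n mat_id y i = y i"
  by (simp add: mat_vec_def mat_id_def flip: of_bool_def)

lemma Bprod_Cons: "Bprod n (p # ps) = mat_mult n (Bmat n p) (Bprod n ps)"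
  by (simp add: Bprod_def)

lemma Bmat_nonneg: "0 \<le> Bmat n p i j"
  unfolding Bmat_def mat_mult_def Pmat_def W_def by (intro sum_nonneg) auto

lemma Bprod_nonneg: "0 \<le> Bprod n ps i j"
proof (induction ps arbitrary: i j)
  case Nil
  then show ?case by (simp add: Bprod_def mat_id_def)
next
  case (Cons p ps)
  then show ?case
    unfolding Bprod_Cons mat_mult_def by (intro sum_nonneg mult_nonneg_nonneg Bmat_nonneg) auto
qed

lemma mat_vec_Bmat:
  assumes "p permutes {..<n}" "i < n"
  shows "mat_vec n (Bmat n p) y i = (\<Sum>j\<in>{p i..<n}. y j / real (j + 1))"
proof -
  have pi: "p i < n" using permutes_in_image[OF assms(1)] assms(2) by auto
  have "mat_vec n (Bmat n p) y i = mat_vec n W y (p i)"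
    unfolding Bmat_def mat_vec_mat_mult using pi by (simp add: mat_vec_def Pmat_def flip: of_bool_def)
  also have "\<dots> = (\<Sum>j\<in>{j\<in>{..<n}. p i \<le> j}. y j / real (j + 1))"
    unfolding mat_vec_def W_def by (subst sum.inter_filter) (auto intro!: sum.cong)
  also have "{j\<in>{..<n}. p i \<le> j} = {p i..<n}" by auto
  finally show ?thesis .
qed

lemma sorting_permutation:
  fixes x :: "nat \<Rightarrow> 'a::linorder"
  obtains q where "q permutes {..<n}" "\<And>i j. i \<le> j \<Longrightarrow> j < n \<Longrightarrow> x (q i) \<le> x (q j)"
proof -
  let ?xs = "map x [0..<n]"
  obtain q where q: "q permutes {..<length ?xs}" "permute_list q ?xs = sort ?xs"
    using mset_eq_permutation[of "sort ?xs" ?xs] by auto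
  have "x (q i) = sort ?xs ! i" if "i < n" for i
    using q permute_list_nth[OF q(1)] permutes_in_image[OF q(1)] that by auto
  with q show thesis
    by (intro that) (auto simp: sorted_nth_mono)
qed

lemma Bmat_covers_orthant:
  assumes "\<forall>i<n. 0 \<le> x i"
  shows "\<exists>p y. p permutes {..<n} \<and> (\<forall>j<n. 0 \<le> y j) \<and> (\<forall>i<n. x i = mat_vec n (Bmat n p) y i)"
proof -
  obtain q where q: "q permutes {..<n}"
    and decr: "\<And>i j. i \<le> j \<Longrightarrow> j < n \<Longrightarrow> x (q j) \<le> x (q i)"
    using sorting_permutation[of n "\<lambda>i. - x i"] by auto
  define z where "z k = (if k < n then x (q k) else 0)" for k
  define y where "y j = real (j + 1) * (z j - z (Suc j))" for j
  have qn: "q k < n" if "k < n" for k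
    using permutes_in_image[OF q] that by auto
  have "z (Suc j) \<le> z j" if "j < n" for j
    using that decr[of j "Suc j"] assms qn unfolding z_def by auto
  then have y_nonneg: "0 \<le> y j" if "j < n" for j
    using that unfolding y_def by simp
  have "x i = mat_vec n (Bmat n (inv q)) y i" if "i < n" for i
  proof -
    have qi: "inv q i < n" using permutes_in_image[OF permutes_inv[OF q]] that by auto
    have "mat_vec n (Bmat n (inv q)) y i = (\<Sum>j\<in>{inv q i..<n}. z j - z (Suc j))"
      unfolding mat_vec_Bmat[OF permutes_inv[OF q] that] y_def by (intro sum.cong) auto
    also have "\<dots> = z (inv q i) - z n"
      using sum_Suc_diff'[of "inv q i" n "\<lambda>j. - z j"] qi by (simp add: sum_negf)
    also have "\<dots> = x i" unfolding z_def using qi by (simp add: permutes_inverses[OF q])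
    finally show ?thesis by simp
  qed
  with permutes_inv[OF q] y_nonneg show ?thesis by blast
qed

lemma Bprod_covers_orthant:
  assumes "\<forall>i<n. 0 \<le> x i"
  shows "\<exists>ps y. length ps = k \<and> (\<forall>p\<in>set ps. p permutes {..<n}) \<and> (\<forall>j<n. 0 \<le> y j)
           \<and> (\<forall>i<n. x i = mat_vec n (Bprod n ps) y i)"
  using assms
proof (induction k arbitrary: x)
  case 0
  then show ?case
    by (intro exI[of _ "[]"] exI[of _ x]) (simp add: Bprod_def mat_vec_mat_id)
next
  case (Suc k)
  obtain p x' where p: "p permutes {..<n}" and x': "\<forall>j<n. 0 \<le> x' j"
    and x_eq: "\<forall>i<n. x i = mat_vec n (Bmat n p) x' i"
    using Bmat_covers_orthant[OF Suc.prems] by blast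
  obtain ps y where ps: "length ps = k" "\<forall>p\<in>set ps. p permutes {..<n}" "\<forall>j<n. 0 \<le> y j"
    and x'_eq: "\<forall>i<n. x' i = mat_vec n (Bprod n ps) y i"
    using Suc.IH x' by blast
  have "x i = mat_vec n (Bprod n (p # ps)) y i" if "i < n" for i
  proof -
    have "x i = mat_vec n (Bmat n p) (mat_vec n (Bprod n ps) y) i"
      using that x_eq x'_eq mat_vec_cong[of n x' "mat_vec n (Bprod n ps) y"] by metis
    then show ?thesis
      by (simp only: Bprod_Cons mat_vec_mat_mult)
  qed
  with p ps show ?case
    by (intro exI[of _ "p # ps"] exI[of _ y]) auto
qed

lemma nonneg_if_SDS_coeffs_nonneg:
  assumes "is_form n F" and coeffs: "\<forall>G\<in>SDS n k F. \<forall>m. 0 \<le> Poly_Mapping.lookup G m"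
    and x: "\<forall>i<n. 0 \<le> x i"
  shows "0 \<le> meval F x"
proof -
  obtain ps y where ps: "length ps = k" "\<forall>p\<in>set ps. p permutes {..<n}"
    and y: "\<forall>j<n. 0 \<le> y j" and x_eq: "\<forall>i<n. x i = mat_vec n (Bprod n ps) y i"
    using Bprod_covers_orthant[OF x, where k = k] by blast
  define y' where "y' j = (if j < n then y j else 0)" for j
  let ?G = "mat_subst n (Bprod n ps) F"
  have "?G \<in> SDS n k F" unfolding SDS_def using ps by blast
  moreover have "meval ?G y' = meval F x"
    unfolding meval_mat_subst
  proof (rule meval_cong_form[OF assms(1)])
    fix i assume "i < n"
    then show "mat_vec n (Bprod n ps) y' i = x i"
      using x_eq by (auto simp: y'_def intro: mat_vec_cong)
  qed
  moreover have "0 \<le> y' j" for j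
    using y by (simp add: y'_def)
  ultimately show ?thesis
    using coeffs meval_nonneg_if_coeffs_nonneg[of ?G y'] by simp
qed

lemma negative_if_SDS_negative_at_ones:
  assumes "G \<in> SDS n k F" "meval G (\<lambda>_. 1) < 0"
  shows "\<exists>x. (\<forall>i<n. 0 \<le> x i) \<and> meval F x < 0"
proof -
  obtain ps where "G = mat_subst n (Bprod n ps) F" using assms(1) unfolding SDS_def by blast
  then have "meval F (mat_vec n (Bprod n ps) (\<lambda>_. 1)) < 0"
    using assms(2) by (simp add: meval_mat_subst)
  moreover have "0 \<le> mat_vec n (Bprod n ps) (\<lambda>_. 1) i" for i
    unfolding mat_vec_def by (simp add: sum_nonneg Bprod_nonneg)
  ultimately show ?thesis by blast
qed

theorem lemma2p2:
  fixes n :: nat and F :: mpoly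
  assumes "is_form n F"
  shows "((\<exists>k::nat. k \<ge> 1 \<and> (\<forall>G\<in>SDS n k F. \<forall>m. Poly_Mapping.lookup G m \<ge> 0))
           \<longrightarrow> (\<forall>x. (\<forall>i<n. x i \<ge> 0) \<longrightarrow> meval F x \<ge> 0))
         \<and> ((\<exists>k::nat. k \<ge> 1 \<and> (\<exists>G\<in>SDS n k F. meval G (\<lambda>_. 1) < 0))
           \<longrightarrow> (\<exists>x. (\<forall>i<n. x i \<ge> 0) \<and> meval F x < 0))"
proof (intro conjI impI allI)
  fix x :: "nat \<Rightarrow> real"
  assume "\<exists>k::nat. k \<ge> 1 \<and> (\<forall>G\<in>SDS n k F. \<forall>m. Poly_Mapping.lookup G m \<ge> 0)"
    and "\<forall>i<n. x i \<ge> 0"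
  then show "meval F x \<ge> 0"
    using nonneg_if_SDS_coeffs_nonneg[OF assms] by blast
next
  assume "\<exists>k::nat. k \<ge> 1 \<and> (\<exists>G\<in>SDS n k F. meval G (\<lambda>_. 1) < 0)"
  then show "\<exists>x. (\<forall>i<n. x i \<ge> 0) \<and> meval F x < 0"
    using negative_if_SDS_negative_at_ones by blast
qed

end
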